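(* Let $G$ be a finite group, $S$ a subset of $G$, and $\sigma,\tau$ the inner automorphisms of $G$ induced by elements $\tilde\sigma,\tilde\tau\in G$ (i.e. $\sigma(x)=\tilde\sigma x\tilde\sigma^{-1}$, $\tau(x)=\tilde\tau x\tilde\tau^{-1}$). Suppose $G$ is a subgroup of a group $\mathcal G$ and there is $g\in\mathcal G$ with $g\tilde\sigma g^{-1}=\tilde\tau$, $gSg^{-1}=S$ and $gGg^{-1}=G$. Then $C(G,S)^\sigma\cong C(G,S)^\tau$ and $C_\Sigma(G,S)^\sigma\cong C_\Sigma(G,S)^\tau$. In particular, if $\tilde\sigma,\tilde\tau\in\mathfrak S_n$ lie in the same conjugacy class and $\sigma,\tau$ are the corresponding inner automorphisms of $\mathfrak S_n$, then for any subset $S$ of $\mathfrak S_n$ there is $g\in\mathfrak S_n$ such that, with $S'=\bigcup_{i}g^iSg^{-i}$, the graphs $C(\mathfrak S_n,S')^\sigma$ and $C(\mathfrak S_n,S')^\tau$ are isomorphic, and the graphs $C_\Sigma(\mathfrak S_n,S')^\sigma$ and $C_\Sigma(\mathfrak S_n,S')^\tau$ are isomorphic.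
   Context: For a group $G$, subset $S$ and automorphism $\sigma$, the twisted Cayley graph $C(G,S)^\sigma$ has vertex set $G$ and an edge from $x$ to $\sigma(xs)$ for each $s\in S$; the twisted Cayley sum graph $C_\Sigma(G,S)^\sigma$ has an edge from $x$ to $\sigma(x^{-1}s)$. *)

theory Defs
  imports "HOL-Algebra.Sym_Groups"
begin

text \<open>Since s maps injectively to
  sigma(x s), the graph has no multiple edges and is represented by its edge relation.\<close>
definition twisted_cayley :: "('a, 'b) monoid_scheme \<Rightarrow> 'a set \<Rightarrow> 'a set \<Rightarrow> ('a \<Rightarrow> 'a) \<Rightarrow> ('a \<times> 'a) set"
  where "twisted_cayley M G S \<sigma> = {(x, \<sigma> (x \<otimes>\<^bsub>M\<^esub> s)) | x s. x \<in> G \<and> s \<in> S}"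

definition twisted_cayley_sum :: "('a, 'b) monoid_scheme \<Rightarrow> 'a set \<Rightarrow> 'a set \<Rightarrow> ('a \<Rightarrow> 'a) \<Rightarrow> ('a \<times> 'a) set"
  where "twisted_cayley_sum M G S \<sigma> = {(x, \<sigma> (inv\<^bsub>M\<^esub> x \<otimes>\<^bsub>M\<^esub> s)) | x s. x \<in> G \<and> s \<in> S}"

definition digraph_iso :: "'a set \<Rightarrow> ('a \<times> 'a) set \<Rightarrow> 'c set \<Rightarrow> ('c \<times> 'c) set \<Rightarrow> bool"
  where "digraph_iso V E V' E' \<longleftrightarrow>
    (\<exists>f. bij_betw f V V' \<and> (\<forall>x\<in>V. \<forall>y\<in>V. (x, y) \<in> E \<longleftrightarrow> (f x, f y) \<in> E'))"

definition inner :: "('a, 'b) monoid_scheme \<Rightarrow> 'a \<Rightarrow> 'a \<Rightarrow> 'a"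
  where "inner M a = (\<lambda>x. a \<otimes>\<^bsub>M\<^esub> x \<otimes>\<^bsub>M\<^esub> inv\<^bsub>M\<^esub> a)"

end

theory Submission
  imports Defs
begin

text \<open>Conjugation \<open>c\<close> by \<open>g\<close> is an automorphism of the ambient group that maps \<open>G\<close> and \<open>S\<close>
  onto themselves and satisfies \<open>c (\<sigma> x) = \<tau> (c x)\<close>, because
  \<open>g \<sigma>\<^sub>0 x \<sigma>\<^sub>0\<inverse> g\<inverse> = \<tau>\<^sub>0 (g x g\<inverse>) \<tau>\<^sub>0\<inverse>\<close> when \<open>\<tau>\<^sub>0 = g \<sigma>\<^sub>0 g\<inverse>\<close>.
  Hence \<open>c\<close> maps each edge \<open>x \<rightarrow> \<sigma> (x s)\<close> to the edge \<open>c x \<rightarrow> \<tau> (c x c s)\<close> and is a graph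
  isomorphism; likewise for the sum graphs. In the symmetric group one takes for \<open>g\<close> an element
  conjugating \<open>\<sigma>\<^sub>0\<close> to \<open>\<tau>\<^sub>0\<close>; the union of the conjugates \<open>g\<^sup>i S g\<^sup>-\<^sup>i\<close> is by construction
  stable under conjugation by \<open>g\<close>.\<close>

lemma digraph_iso_map_prod_image:
  assumes "bij_betw f V V'" and "inj_on f C" and "V \<subseteq> C" and "E \<subseteq> C \<times> C"
  shows "digraph_iso V E V' (map_prod f f ` E)"
proof -
  have edges: "(x, y) \<in> E \<longleftrightarrow> (f x, f y) \<in> map_prod f f ` E" if "x \<in> V" "y \<in> V" for x y
  proof
    assume "(f x, f y) \<in> map_prod f f ` E"
    then obtain x' y' where E: "(x', y') \<in> E" and "f x = f x'" "f y = f y'"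
      by auto
    have "x' \<in> C" "y' \<in> C" "x \<in> C" "y \<in> C"
      using E assms(3,4) that by auto
    with \<open>f x = f x'\<close> \<open>f y = f y'\<close> have "x = x'" "y = y'"
      using inj_onD[OF assms(2)] by blast+
    with E show "(x, y) \<in> E"
      by simp
  qed (rule image_eqI[where x = "(x, y)"], simp_all)
  show ?thesis
    unfolding digraph_iso_def by (intro exI[of _ f] conjI ballI assms(1) edges)
qed

lemma twisted_cayley_eq_image:
  "twisted_cayley M V S \<sigma> = (\<lambda>(x, s). (x, \<sigma> (x \<otimes>\<^bsub>M\<^esub> s))) ` (V \<times> S)"
  unfolding twisted_cayley_def by auto

lemma twisted_cayley_sum_eq_image:
  "twisted_cayley_sum M V S \<sigma> = (\<lambda>(x, s). (x, \<sigma> (inv\<^bsub>M\<^esub> x \<otimes>\<^bsub>M\<^esub> s))) ` (V \<times> S)"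
  unfolding twisted_cayley_sum_def by auto

context group_hom
begin

lemma twisted_cayley_image:
  assumes "V \<subseteq> carrier G" and "S \<subseteq> carrier G"
    and "\<And>x. x \<in> carrier G \<Longrightarrow> h (\<sigma> x) = \<tau> (h x)"
  shows "map_prod h h ` twisted_cayley G V S \<sigma> = twisted_cayley H (h ` V) (h ` S) \<tau>"
proof -
  have "map_prod h h ` twisted_cayley G V S \<sigma> = (\<lambda>(x, s). (h x, h (\<sigma> (x \<otimes> s)))) ` (V \<times> S)"
    by (simp add: twisted_cayley_eq_image image_image case_prod_unfold)
  also have "\<dots> = (\<lambda>(x, s). (h x, \<tau> (h x \<otimes>\<^bsub>H\<^esub> h s))) ` (V \<times> S)"
    using assms by (intro image_cong) (auto simp: subset_iff)
  also have "\<dots> = (\<lambda>(y, t). (y, \<tau> (y \<otimes>\<^bsub>H\<^esub> t))) ` (h ` V \<times> h ` S)"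
    by (simp flip: image_paired_Times add: image_image case_prod_unfold)
  finally show ?thesis
    by (simp only: twisted_cayley_eq_image)
qed

lemma twisted_cayley_sum_image:
  assumes "V \<subseteq> carrier G" and "S \<subseteq> carrier G"
    and "\<And>x. x \<in> carrier G \<Longrightarrow> h (\<sigma> x) = \<tau> (h x)"
  shows "map_prod h h ` twisted_cayley_sum G V S \<sigma> = twisted_cayley_sum H (h ` V) (h ` S) \<tau>"
proof -
  have "map_prod h h ` twisted_cayley_sum G V S \<sigma> = (\<lambda>(x, s). (h x, h (\<sigma> (inv x \<otimes> s)))) ` (V \<times> S)"
    by (simp add: twisted_cayley_sum_eq_image image_image case_prod_unfold)
  also have "\<dots> = (\<lambda>(x, s). (h x, \<tau> (inv\<^bsub>H\<^esub> h x \<otimes>\<^bsub>H\<^esub> h s))) ` (V \<times> S)"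
    using assms by (intro image_cong) (auto simp: subset_iff)
  also have "\<dots> = (\<lambda>(y, t). (y, \<tau> (inv\<^bsub>H\<^esub> y \<otimes>\<^bsub>H\<^esub> t))) ` (h ` V \<times> h ` S)"
    by (simp flip: image_paired_Times add: image_image case_prod_unfold)
  finally show ?thesis
    by (simp only: twisted_cayley_sum_eq_image)
qed

lemma twisted_cayley_iso:
  assumes "inj_on h (carrier G)" and "V \<subseteq> carrier G" and "S \<subseteq> carrier G"
    and "\<sigma> ` carrier G \<subseteq> carrier G" and "\<And>x. x \<in> carrier G \<Longrightarrow> h (\<sigma> x) = \<tau> (h x)"
  shows "digraph_iso V (twisted_cayley G V S \<sigma>) (h ` V) (twisted_cayley H (h ` V) (h ` S) \<tau>)"
proof -
  have edges_carrier: "twisted_cayley G V S \<sigma> \<subseteq> carrier G \<times> carrier G"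
    using assms(2-4) by (auto simp: twisted_cayley_eq_image image_subset_iff subset_iff)
  have bij: "bij_betw h V (h ` V)"
    using assms(1,2) by (simp add: bij_betw_imageI inj_on_subset)
  have "digraph_iso V (twisted_cayley G V S \<sigma>) (h ` V) (map_prod h h ` twisted_cayley G V S \<sigma>)"
    using bij assms(1,2) edges_carrier by (rule digraph_iso_map_prod_image)
  then show ?thesis
    by (simp only: twisted_cayley_image[where \<sigma> = \<sigma> and \<tau> = \<tau>, OF assms(2,3,5)])
qed

lemma twisted_cayley_sum_iso:
  assumes "inj_on h (carrier G)" and "V \<subseteq> carrier G" and "S \<subseteq> carrier G"
    and "\<sigma> ` carrier G \<subseteq> carrier G" and "\<And>x. x \<in> carrier G \<Longrightarrow> h (\<sigma> x) = \<tau> (h x)"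
  shows "digraph_iso V (twisted_cayley_sum G V S \<sigma>) (h ` V)
           (twisted_cayley_sum H (h ` V) (h ` S) \<tau>)"
proof -
  have edges_carrier: "twisted_cayley_sum G V S \<sigma> \<subseteq> carrier G \<times> carrier G"
    using assms(2-4) by (auto simp: twisted_cayley_sum_eq_image image_subset_iff subset_iff)
  have bij: "bij_betw h V (h ` V)"
    using assms(1,2) by (simp add: bij_betw_imageI inj_on_subset)
  have "digraph_iso V (twisted_cayley_sum G V S \<sigma>) (h ` V) (map_prod h h ` twisted_cayley_sum G V S \<sigma>)"
    using bij assms(1,2) edges_carrier by (rule digraph_iso_map_prod_image)
  then show ?thesis
    by (simp only: twisted_cayley_sum_image[where \<sigma> = \<sigma> and \<tau> = \<tau>, OF assms(2,3,5)])
qed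

end

context group
begin

lemma inner_closed [simp]:
  "a \<in> carrier G \<Longrightarrow> x \<in> carrier G \<Longrightarrow> inner G a x \<in> carrier G"
  unfolding inner_def by simp

lemma inner_mult:
  assumes "a \<in> carrier G" and "b \<in> carrier G" and "x \<in> carrier G"
  shows "inner G (a \<otimes> b) x = inner G a (inner G b x)"
  using assms unfolding inner_def by (simp add: m_assoc inv_mult_group)

lemma inner_inner:
  assumes "g \<in> carrier G" and "a \<in> carrier G" and "x \<in> carrier G"
  shows "inner G g (inner G a x) = inner G (inner G g a) (inner G g x)"
proof -
  have "inner G g a \<otimes> g = g \<otimes> a"
    using assms by (simp add: inner_def m_assoc)
  with assms show ?thesis
    by (simp flip: inner_mult)
qed

lemma group_hom_inner: "a \<in> carrier G \<Longrightarrow> group_hom G G (inner G a)"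
  unfolding group_hom_def group_hom_axioms_def inner_def
  by (auto intro!: homI simp: m_assoc is_group) (simp flip: m_assoc)

lemma inj_on_inner: "a \<in> carrier G \<Longrightarrow> inj_on (inner G a) (carrier G)"
  unfolding inner_def by (rule inj_onI) simp

lemma inner_image_carrier:
  assumes "a \<in> carrier G"
  shows "inner G a ` carrier G = carrier G"
proof
  show "carrier G \<subseteq> inner G a ` carrier G"
  proof
    fix y assume y: "y \<in> carrier G"
    have "inner G a (inner G (inv a) y) = inner G (a \<otimes> inv a) y"
      using assms y by (simp only: inner_mult inv_closed)
    also have "\<dots> = y"
      using assms y by (simp add: inner_def)
    finally show "y \<in> inner G a ` carrier G"
      using assms y by (metis image_eqI inner_closed inv_closed)
  qed
qed (use assms in auto)

lemma inner_image_UN_inner_int_pow: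
  assumes "g \<in> carrier G" and "S \<subseteq> carrier G"
  shows "inner G g ` (\<Union>i::int. inner G (g [^] i) ` S) = (\<Union>i::int. inner G (g [^] i) ` S)"
proof -
  have "inner G g (inner G (g [^] i) s) = inner G (g [^] (1 + i)) s" if "s \<in> S" for i :: int and s
    using assms that int_pow_mult[of g 1 i] by (auto simp: inner_mult)
  then have "inner G g ` (\<Union>i::int. inner G (g [^] i) ` S) = (\<Union>i::int. inner G (g [^] (1 + i)) ` S)"
    by (simp add: image_UN image_image cong: image_cong)
  also have "\<dots> = \<Union> ((\<lambda>i. inner G (g [^] i) ` S) ` range ((+) (1::int)))"
    by (simp only: image_image)
  also have "\<dots> = (\<Union>i::int. inner G (g [^] i) ` S)"
    by (simp only: surj_plus)
  finally show ?thesis .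
qed

lemma twisted_cayley_inner_conj_iso:
  assumes "V \<subseteq> carrier G" and "S \<subseteq> carrier G" and "a \<in> carrier G" and "g \<in> carrier G"
    and "inner G g ` V = V" and "inner G g ` S = S"
  shows "digraph_iso V (twisted_cayley G V S (inner G a))
           V (twisted_cayley G V S (inner G (inner G g a)))"
proof -
  interpret conj: group_hom G G "inner G g"
    using assms(4) by (rule group_hom_inner)
  show ?thesis
    using conj.twisted_cayley_iso[where \<sigma> = "inner G a" and \<tau> = "inner G (inner G g a)",
        OF inj_on_inner[OF assms(4)] assms(1,2) _ inner_inner[OF assms(4,3)]] assms(3,5,6)
    by (simp add: image_subset_iff)
qed

lemma twisted_cayley_sum_inner_conj_iso:
  assumes "V \<subseteq> carrier G" and "S \<subseteq> carrier G" and "a \<in> carrier G" and "g \<in> carrier G"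
    and "inner G g ` V = V" and "inner G g ` S = S"
  shows "digraph_iso V (twisted_cayley_sum G V S (inner G a))
           V (twisted_cayley_sum G V S (inner G (inner G g a)))"
proof -
  interpret conj: group_hom G G "inner G g"
    using assms(4) by (rule group_hom_inner)
  show ?thesis
    using conj.twisted_cayley_sum_iso[where \<sigma> = "inner G a" and \<tau> = "inner G (inner G g a)",
        OF inj_on_inner[OF assms(4)] assms(1,2) _ inner_inner[OF assms(4,3)]] assms(3,5,6)
    by (simp add: image_subset_iff)
qed

end

theorem proposition4p3:
  shows "(\<forall>(\<G> :: ('a, 'b) monoid_scheme) G S sa ta g.
            group \<G> \<and> subgroup G \<G> \<and> finite G \<and> S \<subseteq> G \<and> sa \<in> G \<and> ta \<in> G \<and>
            g \<in> carrier \<G> \<and> g \<otimes>\<^bsub>\<G>\<^esub> sa \<otimes>\<^bsub>\<G>\<^esub> inv\<^bsub>\<G>\<^esub> g = ta \<and>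
            (\<lambda>s. g \<otimes>\<^bsub>\<G>\<^esub> s \<otimes>\<^bsub>\<G>\<^esub> inv\<^bsub>\<G>\<^esub> g) ` S = S \<and>
            (\<lambda>x. g \<otimes>\<^bsub>\<G>\<^esub> x \<otimes>\<^bsub>\<G>\<^esub> inv\<^bsub>\<G>\<^esub> g) ` G = G
          \<longrightarrow> digraph_iso G (twisted_cayley \<G> G S (inner \<G> sa))
                           G (twisted_cayley \<G> G S (inner \<G> ta))
            \<and> digraph_iso G (twisted_cayley_sum \<G> G S (inner \<G> sa))
                           G (twisted_cayley_sum \<G> G S (inner \<G> ta)))
       \<and> (\<forall>(n :: nat) sa ta S.
            sa \<in> carrier (sym_group n) \<and> ta \<in> carrier (sym_group n) \<and>
            (\<exists>h \<in> carrier (sym_group n).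
               h \<otimes>\<^bsub>sym_group n\<^esub> sa \<otimes>\<^bsub>sym_group n\<^esub> inv\<^bsub>sym_group n\<^esub> h = ta) \<and>
            S \<subseteq> carrier (sym_group n)
          \<longrightarrow> (\<exists>g \<in> carrier (sym_group n).
                let S' = (\<Union>i :: int. (\<lambda>s. g [^]\<^bsub>sym_group n\<^esub> i \<otimes>\<^bsub>sym_group n\<^esub> s
                                          \<otimes>\<^bsub>sym_group n\<^esub> inv\<^bsub>sym_group n\<^esub> (g [^]\<^bsub>sym_group n\<^esub> i)) ` S)
                in digraph_iso (carrier (sym_group n))
                      (twisted_cayley (sym_group n) (carrier (sym_group n)) S' (inner (sym_group n) sa))
                      (carrier (sym_group n))
                      (twisted_cayley (sym_group n) (carrier (sym_group n)) S' (inner (sym_group n) ta))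
                 \<and> digraph_iso (carrier (sym_group n))
                      (twisted_cayley_sum (sym_group n) (carrier (sym_group n)) S' (inner (sym_group n) sa))
                      (carrier (sym_group n))
                      (twisted_cayley_sum (sym_group n) (carrier (sym_group n)) S' (inner (sym_group n) ta))))"
proof ((rule conjI; intro allI impI; elim conjE exE bexE), goal_cases)
  case (1 \<G> G S sa ta g)
  then interpret group \<G>
    by blast
  have G: "G \<subseteq> carrier \<G>"
    using 1 subgroup.subset by blast
  have conj: "inner \<G> g sa = ta" "inner \<G> g ` G = G" "inner \<G> g ` S = S"
    using 1 by (simp_all only: inner_def)
  have S: "S \<subseteq> carrier \<G>" and sa: "sa \<in> carrier \<G>"
    using 1 G by auto
  show ?case
    using twisted_cayley_inner_conj_iso[OF G S sa _ conj(2,3)]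
      twisted_cayley_sum_inner_conj_iso[OF G S sa _ conj(2,3)] 1
    unfolding conj(1) by blast
next
  case (2 n sa ta S h)
  interpret sym: group "sym_group n"
    by (rule sym_group_is_group)
  let ?C = "carrier (sym_group n)"
  define S' where "S' = (\<Union>i::int. inner (sym_group n) (h [^]\<^bsub>sym_group n\<^esub> i) ` S)"
  have h: "h \<in> ?C" and sa: "sa \<in> ?C"
    using 2 by blast+
  have S': "S' \<subseteq> ?C" "inner (sym_group n) h ` S' = S'"
    using 2 sym.inner_image_UN_inner_int_pow by (auto simp: S'_def)
  have conj: "inner (sym_group n) h sa = ta"
    using 2 by (simp only: inner_def)
  note C = sym.inner_image_carrier[OF h]
  note isos = sym.twisted_cayley_inner_conj_iso[OF subset_refl S'(1) sa h C S'(2)]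
    sym.twisted_cayley_sum_inner_conj_iso[OF subset_refl S'(1) sa h C S'(2)]
  show ?case
    using isos[unfolded conj] h unfolding Let_def S'_def inner_def by (intro bexI[of _ h] conjI)
qed

end
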